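(* Let $\mathbb{F}$ be an algebraically closed field of characteristic $p>2$ and $(V,[\cdot,\cdot]_V,\alpha_V,B_V)$ a restricted involutive quadratic Hom-Lie algebra with $p$-structure $[p]_V$. Let $L=\mathbb{F}e^*\oplus V\oplus\mathbb{F}e$ be the double extension of $V$ by $(\mathscr{D},x_0,1,\lambda_0)$ and $\widetilde L=\mathbb{F}\widetilde e^*\oplus V\oplus\mathbb{F}\widetilde e$ the double extension by $(\widetilde{\mathscr{D}},\widetilde x_0,1,\widetilde\lambda_0)$, where $\mathscr{D},\widetilde{\mathscr{D}}\in\mathrm{Der}_{\alpha_V}(V)$ are restricted derivations with the $p$-property (data $\xi,a_0$ resp. $\widetilde\xi,\widetilde a_0$) and $B_V$ is $\mathscr{D}$- and $\widetilde{\mathscr{D}}$-invariant. Let $L$ carry the $p$-structure $u^{[p]_L}=u^{[p]_V}+\mathscr{P}(u)e$ ($u\in V$), $(e^* )^{[p]_L}=a_0+le+\xi e^*$, $e^{[p]_L}=me+u_0$, and $\widetilde L$ the $p$-structure $u^{[p]_{\widetilde L}}=u^{[p]_V}+\widetilde{\mathscr{P}}(u)\widetilde e$, $(\widetilde e^* )^{[p]_{\widetilde L}}=\widetilde a_0+\widetilde l\widetilde e+\widetilde\xi\widetilde e^*$, $\widetilde e^{[p]_{\widetilde L}}=\widetilde m\widetilde e+\widetilde u_0$, where $l,m,\widetilde l,\widetilde m\in\mathbb{F}$, $u_0,\widetilde u_0\in\mathfrak z(V)$ with $\mathscr{D}(u_0)=\widetilde{\mathscr{D}}(\widetilde u_0)=0$,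 and $\mathscr{P},\widetilde{\mathscr{P}}:V\to\mathbb{F}$ satisfy $\mathscr{P}(cu)=c^p\mathscr{P}(u)$, $\mathscr{P}(u+v)=\mathscr{P}(u)+\mathscr{P}(v)+\sum_{i=1}^{p-1}\eta_i^V(u,v)$ (and likewise $\widetilde{\mathscr{P}}$ with $\widetilde\eta_i^V$ defined using $\widetilde{\mathscr{D}}$). Let $\pi:L\to\widetilde L$ be an adapted isomorphism of the form $\pi(u)=\pi_0(u)+B_V(t_\pi,u)\widetilde e$ ($u\in V$), $\pi(e)=\gamma\widetilde e$, $\pi(e^* )=\gamma^{-1}(\widetilde e^*-\pi_0(t_\pi)-\frac12B_V(t_\pi,t_\pi)\widetilde e)$, where $\pi_0$ is an automorphism of $V$, $\gamma\in\mathbb{F}\setminus\{0\}$ and $t_\pi\in V$. Then $\pi$ is restricted (i.e. $\pi(f^{[p]_L})=\pi(f)^{[p]_{\widetilde L}}$ for all $f\in L$) if and only if $\pi_0(u^{[p]_V})=(\pi_0(u))^{[p]_V}+B_V(t_\pi,u)^p\widetilde u_0$ for all $u\in V$ and $\widetilde{\mathscr{P}}\circ\pi_0=\gamma\mathscr{P}+B_V(t_\pi,(\cdot)^{[p]_V})-B_V(t_\pi,\cdot)^p\widetilde m$, $\widetilde\xi=\gamma^{p-1}\xi$, $\widetilde l=\gamma^p\big(B_V(t_\pi,a_0)+\gamma l-\frac{\xi}{2\gamma}B_V(t_\pi,t_\pi)\big)+\widetilde{\mathscr{P}}(\pi_0(t_\pi))+\frac{1}{2^p}B_V(t_\pi,t_\pi)^p\widetilde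 m-\sum_{i=1}^{p-1}\frac1i\Phi_{i,\mathrm{II}}$, $\widetilde a_0=\gamma^p(\pi_0(a_0)-\gamma^{-1}\xi\pi_0(t_\pi))+\frac{1}{2^p}B_V(t_\pi,t_\pi)^p\widetilde u_0+\pi_0(t_\pi)^{[p]_V}-\sum_{i=1}^{p-1}\frac1i\Phi_{i,\mathrm{I}}$, $\widetilde m=\gamma^{-p}(\gamma m+B_V(t_\pi,u_0))$, $\widetilde u_0=\gamma^{-p}\pi_0(u_0)$.
   Context: Hom-Lie algebra: $(\mathfrak g,[\cdot,\cdot],\alpha)$ with $[x,y]=-[y,x]$, $[\alpha(x),[y,z]]+[\alpha(y),[z,x]]+[\alpha(z),[x,y]]=0$, $\alpha([x,y])=[\alpha x,\alpha y]$; involutive: $\alpha^2=\mathrm{id}$; quadratic: symmetric nondegenerate bilinear $B$, $B([x,y],z)=B(x,[y,z])$, $B(\alpha x,y)=B(x,\alpha y)$. $p$-structure: map $x\mapsto x^{[p]}$ with $\mathrm{ad}(x^{[p]})\alpha^{p-1}=\mathrm{ad}(\alpha^{p-1}x)\cdots\mathrm{ad}(x)$, $(kx)^{[p]}=k^px^{[p]}$, $(x+y)^{[p]}=x^{[p]}+y^{[p]}+\sum_{i=1}^{p-1}s_i(x,y)$ with $\mathrm{ad}(\alpha^{p-2}(kx+y))\cdots\mathrm{ad}(kx+y)(x)=\sum_i is_i(x,y)k^{i-1}$. $\mathrm{Der}_{\alpha_V}(V)$: linear $\mathscr{D}$ with $\mathscr{D}\alpha_V=\alpha_V\mathscr{D}$,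 $\mathscr{D}[x,y]_V=[\mathscr{D}x,\alpha_Vy]_V+[\alpha_Vx,\mathscr{D}y]_V$; restricted: $\mathscr{D}(x^{[p]_V})=\mathrm{ad}_V(\alpha_V^{p-1}x)\cdots\mathrm{ad}_V(\alpha_Vx)(\mathscr{D}x)$; $p$-property with data $\xi,a_0$: $\mathscr{D}^p=\xi\mathscr{D}\alpha_V^{p-1}+\mathrm{ad}_V(a_0)\alpha_V^{p-1}$, $\mathscr{D}(a_0)=0$. $B_V$ $\mathscr{D}$-invariant: $B_V(\mathscr{D}x,y)+B_V(x,\mathscr{D}y)=0$. $\eta_i^V(u,v)$: defined by $B_V(\mathscr{D}(\alpha_V^{p-2}(ku+v)),\mathrm{ad}_V(\alpha_V^{p-3}(ku+v))\cdots\mathrm{ad}_V(ku+v)(u))=\sum_{i=1}^{p-1}i\eta_i^V(u,v)k^{i-1}$ for all $k$. Double extension by $(\mathscr{D},x_0,1,\lambda_0)$, where $x_0\in V$ satisfies $\mathscr{D}+\mathrm{ad}_V(x_0)=\mathscr{D}$, $\alpha_V(\mathscr{D}x_0)=-\mathscr{D}x_0$, $\alpha_V\mathscr{D}^2-\mathscr{D}^2\alpha_V=\mathrm{ad}_V(\mathscr{D}x_0)$: $L=\mathbb{F}e^*\oplus V\oplus\mathbb{F}e$ with skew bracket $[x,y]=[x,y]_V+B_V(\mathscr{D}x,y)e$, $[e^*,x]=-[x,e^*]=\mathscr{D}x$, $[e^*,e^*]=0$, $e$ central; $\alpha(x)=\alpha_V(x)+B_V(x_0,x)e$, $\alpha(e^*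 )=e^*+x_0+\lambda_0e$, $\alpha(e)=e$; $B|_V=B_V$, $B(V,e)=B(V,e^* )=0$, $B(e^*,e)=1$, $B(e^*,e^* )=B(e,e)=0$ (likewise $\widetilde L$ with twist $\widetilde\alpha$). Adapted isomorphism: linear bijection $\pi:L\to\widetilde L$ preserving brackets and forms, $\pi\alpha=\widetilde\alpha\pi$, $\pi(\mathbb{F}e\oplus V)=\mathbb{F}\widetilde e\oplus V$. Automorphism $\pi_0$ of $V$: linear bijection preserving $[\cdot,\cdot]_V$, $B_V$ and commuting with $\alpha_V$. $\Phi_{i,\mathrm I}\in V$, $\Phi_{i,\mathrm{II}}\in\mathbb{F}$: define $\Phi_i\in\widetilde L$ ($1\le i\le p-1$) by $\mathrm{ad}(\widetilde\alpha^{p-2}(k\widetilde e^*-\pi_0(t_\pi)))\circ\cdots\circ\mathrm{ad}(k\widetilde e^*-\pi_0(t_\pi))(\widetilde e^* )=\sum_{i=1}^{p-1}\Phi_ik^{i-1}$ for all $k\in\mathbb{F}$ (brackets in $\widetilde L$), and let $\Phi_{i,\mathrm I}$ and $\Phi_{i,\mathrm{II}}$ be the $V$-component and the $\widetilde e$-coefficient of $\Phi_i$ in $\widetilde L=\mathbb{F}\widetilde e^*\oplus V\oplus\mathbb{F}\widetilde e$. *)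

theory Defs
  imports "HOL-Computational_Algebra.Polynomial" "HOL-Library.Product_Plus"
begin

definition lin :: "('f \<Rightarrow> 'a \<Rightarrow> 'a) \<Rightarrow> ('f \<Rightarrow> 'b \<Rightarrow> 'b) \<Rightarrow> ('a::ab_group_add \<Rightarrow> 'b::ab_group_add) \<Rightarrow> bool" where
  "lin s1 s2 f \<longleftrightarrow> (\<forall>x y. f (x + y) = f x + f y) \<and> (\<forall>c x. f (s1 c x) = s2 c (f x))"

primrec iter_ad :: "('a \<Rightarrow> 'a \<Rightarrow> 'a) \<Rightarrow> ('a \<Rightarrow> 'a) \<Rightarrow> nat \<Rightarrow> 'a \<Rightarrow> 'a \<Rightarrow> 'a" where
  "iter_ad br al 0 z x = x"
| "iter_ad br al (Suc n) z x = br ((al ^^ n) z) (iter_ad br al n z x)"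

definition hom_lie :: "('f::field \<Rightarrow> 'a \<Rightarrow> 'a) \<Rightarrow> ('a::ab_group_add \<Rightarrow> 'a \<Rightarrow> 'a) \<Rightarrow> ('a \<Rightarrow> 'a) \<Rightarrow> bool" where
  "hom_lie sc br al \<longleftrightarrow> vector_space sc \<and> (\<forall>x. lin sc sc (br x)) \<and> (\<forall>y. lin sc sc (\<lambda>x. br x y))
     \<and> lin sc sc al \<and> (\<forall>x y. br x y = - br y x)
     \<and> (\<forall>x y z. br (al x) (br y z) + br (al y) (br z x) + br (al z) (br x y) = 0)
     \<and> (\<forall>x y. al (br x y) = br (al x) (al y))"

definition quadratic_form :: "('f::field \<Rightarrow> 'a \<Rightarrow> 'a) \<Rightarrow> ('a::ab_group_add \<Rightarrow> 'a \<Rightarrow> 'a) \<Rightarrow> ('a \<Rightarrow> 'a) \<Rightarrow> ('a \<Rightarrow> 'a \<Rightarrow> 'f) \<Rightarrow> bool" where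
  "quadratic_form sc br al B \<longleftrightarrow> (\<forall>x. lin sc (*) (B x)) \<and> (\<forall>x y. B x y = B y x)
     \<and> (\<forall>x. (\<forall>y. B x y = 0) \<longrightarrow> x = 0)
     \<and> (\<forall>x y z. B (br x y) z = B x (br y z)) \<and> (\<forall>x y. B (al x) y = B x (al y))"

definition p_structure :: "nat \<Rightarrow> ('f::field \<Rightarrow> 'a \<Rightarrow> 'a) \<Rightarrow> ('a::ab_group_add \<Rightarrow> 'a \<Rightarrow> 'a) \<Rightarrow> ('a \<Rightarrow> 'a) \<Rightarrow> ('a \<Rightarrow> 'a) \<Rightarrow> bool" where
  "p_structure p sc br al pm \<longleftrightarrow>
     (\<forall>x y. br (pm x) ((al ^^ (p - 1)) y) = iter_ad br al p x y)
   \<and> (\<forall>k x. pm (sc k x) = sc (k ^ p) (pm x))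
   \<and> (\<forall>x y. \<exists>s :: nat \<Rightarrow> 'a.
         (\<forall>k. iter_ad br al (p - 1) (sc k x + y) x = (\<Sum>i = 1..p - 1. sc (of_nat i * k ^ (i - 1)) (s i)))
       \<and> pm (x + y) = pm x + pm y + (\<Sum>i = 1..p - 1. s i))"

definition restricted_inv_quad_hom_lie ::
  "nat \<Rightarrow> ('f::field \<Rightarrow> 'a \<Rightarrow> 'a) \<Rightarrow> ('a::ab_group_add \<Rightarrow> 'a \<Rightarrow> 'a) \<Rightarrow> ('a \<Rightarrow> 'a) \<Rightarrow> ('a \<Rightarrow> 'a \<Rightarrow> 'f) \<Rightarrow> ('a \<Rightarrow> 'a) \<Rightarrow> bool" where
  "restricted_inv_quad_hom_lie p sc br al B pm \<longleftrightarrow> hom_lie sc br al \<and> (\<forall>x. al (al x) = x)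
     \<and> quadratic_form sc br al B \<and> p_structure p sc br al pm"

definition hom_der :: "('f::field \<Rightarrow> 'a \<Rightarrow> 'a) \<Rightarrow> ('a::ab_group_add \<Rightarrow> 'a \<Rightarrow> 'a) \<Rightarrow> ('a \<Rightarrow> 'a) \<Rightarrow> ('a \<Rightarrow> 'a) \<Rightarrow> bool" where
  "hom_der sc br al D \<longleftrightarrow> lin sc sc D \<and> (\<forall>x. D (al x) = al (D x))
     \<and> (\<forall>x y. D (br x y) = br (D x) (al y) + br (al x) (D y))"

definition restricted_der :: "nat \<Rightarrow> ('a \<Rightarrow> 'a \<Rightarrow> 'a) \<Rightarrow> ('a \<Rightarrow> 'a) \<Rightarrow> ('a \<Rightarrow> 'a) \<Rightarrow> ('a \<Rightarrow> 'a) \<Rightarrow> bool" where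
  "restricted_der p br al pm D \<longleftrightarrow> (\<forall>x. D (pm x) = iter_ad br al (p - 1) (al x) (D x))"

definition p_property :: "nat \<Rightarrow> ('f \<Rightarrow> 'a \<Rightarrow> 'a) \<Rightarrow> ('a::ab_group_add \<Rightarrow> 'a \<Rightarrow> 'a) \<Rightarrow> ('a \<Rightarrow> 'a) \<Rightarrow> ('a \<Rightarrow> 'a) \<Rightarrow> 'f \<Rightarrow> 'a \<Rightarrow> bool" where
  "p_property p sc br al D xi a0 \<longleftrightarrow>
     (\<forall>x. (D ^^ p) x = sc xi (D ((al ^^ (p - 1)) x)) + br a0 ((al ^^ (p - 1)) x)) \<and> D a0 = 0"

definition form_invariant :: "('a \<Rightarrow> 'a \<Rightarrow> 'f::ab_group_add) \<Rightarrow> ('a \<Rightarrow> 'a) \<Rightarrow> bool" where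
  "form_invariant B D \<longleftrightarrow> (\<forall>x y. B (D x) y + B x (D y) = 0)"

definition dext_data :: "('a::ab_group_add \<Rightarrow> 'a \<Rightarrow> 'a) \<Rightarrow> ('a \<Rightarrow> 'a) \<Rightarrow> ('a \<Rightarrow> 'a) \<Rightarrow> 'a \<Rightarrow> bool" where
  "dext_data br al D x0 \<longleftrightarrow> (\<forall>y. D y + br x0 y = D y) \<and> al (D x0) = - D x0
     \<and> (\<forall>y. al (D (D y)) - D (D (al y)) = br (D x0) y)"

text \<open>Elements of L = F e* + V + F e are triples (coefficient of e*, V-part, coefficient of e).\<close>
definition dsc :: "('f::field \<Rightarrow> 'v \<Rightarrow> 'v) \<Rightarrow> 'f \<Rightarrow> 'f \<times> 'v \<times> 'f \<Rightarrow> 'f \<times> 'v \<times> 'f" where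
  "dsc sc c = (\<lambda>(a, x, b). (c * a, sc c x, c * b))"

definition dbr :: "('f::field \<Rightarrow> 'v \<Rightarrow> 'v) \<Rightarrow> ('v::ab_group_add \<Rightarrow> 'v \<Rightarrow> 'v) \<Rightarrow> ('v \<Rightarrow> 'v \<Rightarrow> 'f) \<Rightarrow> ('v \<Rightarrow> 'v)
    \<Rightarrow> 'f \<times> 'v \<times> 'f \<Rightarrow> 'f \<times> 'v \<times> 'f \<Rightarrow> 'f \<times> 'v \<times> 'f" where
  "dbr sc br B D = (\<lambda>(a, x, b) (a', y, b'). (0, br x y + sc a (D y) - sc a' (D x), B (D x) y))"

definition dal :: "('f::field \<Rightarrow> 'v \<Rightarrow> 'v) \<Rightarrow> ('v::ab_group_add \<Rightarrow> 'v) \<Rightarrow> ('v \<Rightarrow> 'v \<Rightarrow> 'f) \<Rightarrow> 'v \<Rightarrow> 'f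
    \<Rightarrow> 'f \<times> 'v \<times> 'f \<Rightarrow> 'f \<times> 'v \<times> 'f" where
  "dal sc al B x0 lam0 = (\<lambda>(a, x, b). (a, al x + sc a x0, B x0 x + a * lam0 + b))"

definition dB :: "('v \<Rightarrow> 'v \<Rightarrow> 'f::field) \<Rightarrow> 'f \<times> 'v \<times> 'f \<Rightarrow> 'f \<times> 'v \<times> 'f \<Rightarrow> 'f" where
  "dB B = (\<lambda>(a, x, b) (a', y, b'). B x y + a * b' + a' * b)"

definition V_automorphism :: "('f::field \<Rightarrow> 'v \<Rightarrow> 'v) \<Rightarrow> ('v::ab_group_add \<Rightarrow> 'v \<Rightarrow> 'v) \<Rightarrow> ('v \<Rightarrow> 'v) \<Rightarrow> ('v \<Rightarrow> 'v \<Rightarrow> 'f) \<Rightarrow> ('v \<Rightarrow> 'v) \<Rightarrow> bool" where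
  "V_automorphism sc br al B f \<longleftrightarrow> lin sc sc f \<and> bij f \<and> (\<forall>x y. f (br x y) = br (f x) (f y))
     \<and> (\<forall>x y. B (f x) (f y) = B x y) \<and> (\<forall>x. f (al x) = al (f x))"

definition adapted_iso :: "('f::field \<Rightarrow> 'v::ab_group_add \<Rightarrow> 'v) \<Rightarrow>
    ('f \<times> 'v \<times> 'f \<Rightarrow> 'f \<times> 'v \<times> 'f \<Rightarrow> 'f \<times> 'v \<times> 'f) \<Rightarrow> ('f \<times> 'v \<times> 'f \<Rightarrow> 'f \<times> 'v \<times> 'f) \<Rightarrow> ('f \<times> 'v \<times> 'f \<Rightarrow> 'f \<times> 'v \<times> 'f \<Rightarrow> 'f) \<Rightarrow>
    ('f \<times> 'v \<times> 'f \<Rightarrow> 'f \<times> 'v \<times> 'f \<Rightarrow> 'f \<times> 'v \<times> 'f) \<Rightarrow> ('f \<times> 'v \<times> 'f \<Rightarrow> 'f \<times> 'v \<times> 'f) \<Rightarrow> ('f \<times> 'v \<times> 'f \<Rightarrow> 'f \<times> 'v \<times> 'f \<Rightarrow> 'f) \<Rightarrow>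
    ('f \<times> 'v \<times> 'f \<Rightarrow> 'f \<times> 'v \<times> 'f) \<Rightarrow> bool" where
  "adapted_iso sc brL alL BL brT alT BT f \<longleftrightarrow> lin (dsc sc) (dsc sc) f \<and> bij f
     \<and> (\<forall>x y. f (brL x y) = brT (f x) (f y)) \<and> (\<forall>x y. BT (f x) (f y) = BL x y)
     \<and> (\<forall>x. f (alL x) = alT (f x))
     \<and> f ` {(a, v, b). a = 0} = {(a, v, b). a = 0}"

end

theory Submission
  imports Defs "HOL-Computational_Algebra.Primes"
begin

text \<open>
  Both p-maps are p-semilinear and obey the same addition formula, whose correction terms are
  forced by the iterated adjoint: over an infinite field a polynomial identity in \<open>k\<close>
  determines its coefficients. Hence an isomorphism of the double extensions is restricted as
  soon as it is restricted on \<open>e*\<close>, on \<open>e\<close> and on \<open>V\<close>, and the theorem amounts to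
  comparing both sides on these generators. The only nontrivial generator is \<open>e*\<close>, whose
  image is \<open>(e* - \<pi>0 t + h e) / \<gamma>\<close> with \<open>h = - B t t / 2\<close>: as \<open>e\<close> is central and fixed by
  the twist, the correction terms of the p-th power of \<open>e* + (- \<pi>0 t + h e)\<close> are exactly
  the \<open>\<Phi> i / i\<close>, which produces the formulas for \<open>l\<close> and \<open>a0\<close> of the second extension.
\<close>

subsection \<open>Polynomial identities over an infinite field\<close>

lemma infinite_UNIV_alg_closed_field: "infinite (UNIV :: 'f::alg_closed_field set)"
proof
  assume fin: "finite (UNIV :: 'f set)"
  define q :: "'f poly" where "q = (\<Prod>a\<in>UNIV. [:-a, 1:]) + 1"
  have "degree (\<Prod>a\<in>(UNIV::'f set). [:-a, 1:]) = card (UNIV::'f set)"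
    by (subst degree_prod_eq_sum_degree) auto
  moreover have "card (UNIV::'f set) > 0" using fin by (simp add: card_gt_0_iff)
  ultimately have "degree q > 0" by (simp add: q_def degree_add_eq_left)
  then obtain x where "poly q x = 0" using alg_closed_imp_poly_has_root by blast
  moreover have "poly (\<Prod>a\<in>(UNIV::'f set). [:-a, 1:]) x = 0"
    by (simp add: poly_prod fin)
  ultimately show False unfolding q_def by simp
qed

lemma poly_fun_eq_0_coeff_eq_0:
  fixes f :: "nat \<Rightarrow> 'f::field"
  assumes "infinite (UNIV :: 'f set)" and "\<And>k. (\<Sum>i<n. f i * k ^ i) = 0" and "i < n"
  shows "f i = 0"
proof -
  define q where "q = (\<Sum>j<n. monom (f j) j)"
  have "poly q k = 0" for k using assms(2) by (simp add: q_def poly_sum poly_monom)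
  with assms(1) have "q = 0" using poly_roots_finite[of q] by auto
  moreover have "coeff q i = f i" using assms(3) by (simp add: q_def coeff_sum)
  ultimately show ?thesis by simp
qed

lemma of_nat_neq_0_if_less_CHAR: "0 < i \<Longrightarrow> i < CHAR('a::semiring_1) \<Longrightarrow> of_nat i \<noteq> (0::'a)"
  by (auto simp: of_nat_eq_0_iff_char_dvd dest: dvd_imp_le)

context vector_space
begin

text \<open>The vector case reduces to the scalar one by a linear functional that is 1 on the coefficient.\<close>
lemma scale_poly_fun_eq_0_coeff_eq_0:
  assumes inf: "infinite (UNIV :: 'a set)" and zero: "\<And>k. (\<Sum>i<n. scale (k ^ i) (c i)) = 0"
    and i: "i < n"
  shows "c i = 0"
proof (rule ccontr)
  assume "c i \<noteq> 0"
  interpret vp: vector_space_pair scale "(*) :: 'a \<Rightarrow> 'a \<Rightarrow> 'a"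
    by unfold_locales (auto simp: algebra_simps)
  have "independent {c i}"
    using \<open>c i \<noteq> 0\<close> independent_insertI[of "c i" "{}"] by simp
  then obtain g where g: "Vector_Spaces.linear scale (*) g" "g (c i) = 1"
    using vp.linear_independent_extend[of "{c i}" "\<lambda>_. 1"] by auto
  have "(\<Sum>j<n. g (c j) * k ^ j) = 0" for k
  proof -
    have "(\<Sum>j<n. g (c j) * k ^ j) = g (\<Sum>j<n. scale (k ^ j) (c j))"
      using g(1) by (simp add: vp.linear_sum vp.linear_scale mult.commute)
    also have "\<dots> = 0" using zero g(1) by (simp add: vp.linear_0)
    finally show ?thesis .
  qed
  from poly_fun_eq_0_coeff_eq_0[OF inf this i] g(2) show False by simp
qed

lemma weighted_poly_fun_eq_coeffs_eq:
  assumes inf: "infinite (UNIV :: 'a set)" and char: "CHAR('a) = p"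
    and eq: "\<And>k. (\<Sum>i = 1..p - 1. scale (of_nat i * k ^ (i - 1)) (v i))
                 = (\<Sum>i = 1..p - 1. scale (of_nat i * k ^ (i - 1)) (w i))"
    and i: "i \<in> {1..p - 1}"
  shows "v i = w i"
proof -
  define c where "c j = scale (of_nat (Suc j)) (v (Suc j) - w (Suc j))" for j
  have "(\<Sum>j<p - 1. scale (k ^ j) (c j)) = 0" for k
  proof -
    have "(\<Sum>j<p - 1. scale (k ^ j) (c j))
        = (\<Sum>i = 1..p - 1. scale (of_nat i * k ^ (i - 1)) (v i - w i))"
      by (simp add: sum.atLeast1_atMost_eq c_def scale_scale mult.commute)
    also have "\<dots> = 0"
      using eq[of k] by (simp add: scale_right_diff_distrib sum_subtractf)
    finally show ?thesis .
  qed
  from scale_poly_fun_eq_0_coeff_eq_0[OF inf this, of "i - 1"] i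
  have "scale (of_nat i) (v i - w i) = 0" by (auto simp: c_def)
  moreover have "(of_nat i :: 'a) \<noteq> 0"
    using i char by (intro of_nat_neq_0_if_less_CHAR) auto
  ultimately show ?thesis by simp
qed

end

subsection \<open>p-maps and homomorphisms\<close>

lemma lin_0: "lin s1 s2 f \<Longrightarrow> f 0 = 0"
  unfolding lin_def by (metis add_cancel_right_right add_0)

lemma lin_add: "lin s1 s2 f \<Longrightarrow> f (x + y) = f x + f y"
  unfolding lin_def by blast

lemma lin_scale: "lin s1 s2 f \<Longrightarrow> f (s1 c x) = s2 c (f x)"
  unfolding lin_def by blast

lemma lin_sum: "lin s1 s2 f \<Longrightarrow> f (sum g A) = (\<Sum>a\<in>A. f (g a))"
  by (induction A rule: infinite_finite_induct) (simp_all add: lin_0 lin_add)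

lemma funpow_intertwine: "(\<And>x. f (a x) = b (f x)) \<Longrightarrow> f ((a ^^ n) x) = (b ^^ n) (f x)"
  by (induction n) auto

lemma iter_ad_hom:
  assumes "\<And>x y. f (br1 x y) = br2 (f x) (f y)" and "\<And>x. f (al1 x) = al2 (f x)"
  shows "f (iter_ad br1 al1 n z w) = iter_ad br2 al2 n (f z) (f w)"
  by (induction n) (simp_all add: assms funpow_intertwine[of f al1 al2])

lemma iter_ad_Suc_eq_0:
  assumes "br z w = 0" and "\<And>x. br x 0 = 0"
  shows "iter_ad br al (Suc n) z w = 0"
  by (induction n) (simp_all add: assms)

lemma p_structure_scale: "p_structure p S br al pm \<Longrightarrow> pm (S k x) = S (k ^ p) (pm x)"
  unfolding p_structure_def by blast

text \<open>
  Since the coefficients in \<open>k\<close> are unique, the correction terms can be read off from any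
  expansion of the iterated adjoint.
\<close>
lemma p_structure_add:
  fixes S :: "'f::field \<Rightarrow> 'a::ab_group_add \<Rightarrow> 'a"
  assumes ps: "p_structure p S br al pm" and vs: "vector_space S"
    and inf: "infinite (UNIV :: 'f set)" and char: "CHAR('f) = p"
    and \<Phi>: "\<And>k. iter_ad br al (p - 1) (S k x + y) x = (\<Sum>i = 1..p - 1. S (k ^ (i - 1)) (\<Phi> i))"
  shows "pm (x + y) = pm x + pm y + (\<Sum>i = 1..p - 1. S (inverse (of_nat i)) (\<Phi> i))"
proof -
  interpret vector_space S by (rule vs)
  obtain s where s: "\<forall>k. iter_ad br al (p - 1) (S k x + y) x = (\<Sum>i = 1..p - 1. S (of_nat i * k ^ (i - 1)) (s i))"
    "pm (x + y) = pm x + pm y + (\<Sum>i = 1..p - 1. s i)"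
    using ps unfolding p_structure_def by blast
  have "(\<Sum>i = 1..p - 1. S (of_nat i * k ^ (i - 1)) (s i))
      = (\<Sum>i = 1..p - 1. S (of_nat i * k ^ (i - 1)) (S (inverse (of_nat i)) (\<Phi> i)))" for k
  proof -
    have "(of_nat i :: 'f) \<noteq> 0" if "i \<in> {1..p - 1}" for i
      using that char by (intro of_nat_neq_0_if_less_CHAR) auto
    then have "(\<Sum>i = 1..p - 1. S (of_nat i * k ^ (i - 1)) (S (inverse (of_nat i)) (\<Phi> i)))
        = (\<Sum>i = 1..p - 1. S (k ^ (i - 1)) (\<Phi> i))"
      by (intro sum.cong) (auto simp: scale_scale)
    then show ?thesis using s(1) \<Phi> by simp
  qed
  then have "s i = S (inverse (of_nat i)) (\<Phi> i)" if "i \<in> {1..p - 1}" for i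
    by (rule weighted_poly_fun_eq_coeffs_eq[OF inf char _ that])
  then have "(\<Sum>i = 1..p - 1. s i) = (\<Sum>i = 1..p - 1. S (inverse (of_nat i)) (\<Phi> i))"
    by (rule sum.cong[OF refl])
  with s(2) show ?thesis by simp
qed

corollary p_structure_add_if_iter_ad_eq_0:
  fixes S :: "'f::field \<Rightarrow> 'a::ab_group_add \<Rightarrow> 'a"
  assumes "p_structure p S br al pm" and "vector_space S"
    and "infinite (UNIV :: 'f set)" and "CHAR('f) = p"
    and "\<And>k. iter_ad br al (p - 1) (S k x + y) x = 0"
  shows "pm (x + y) = pm x + pm y"
proof -
  interpret vector_space S by fact
  show ?thesis using p_structure_add[OF assms(1-4), of x y "\<lambda>_. 0"] assms(5) by simp
qed

lemma p_map_hom_add: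
  fixes S :: "'f::field \<Rightarrow> 'a::ab_group_add \<Rightarrow> 'a" and T :: "'f \<Rightarrow> 'b::ab_group_add \<Rightarrow> 'b"
  assumes ps1: "p_structure p S br1 al1 pm1" and ps2: "p_structure p T br2 al2 pm2"
    and vs2: "vector_space T" and inf: "infinite (UNIV :: 'f set)" and char: "CHAR('f) = p"
    and f: "lin S T f" "\<And>x y. f (br1 x y) = br2 (f x) (f y)" "\<And>x. f (al1 x) = al2 (f x)"
    and x: "f (pm1 x) = pm2 (f x)" and y: "f (pm1 y) = pm2 (f y)"
  shows "f (pm1 (x + y)) = pm2 (f (x + y))"
proof -
  obtain s where s: "\<forall>k. iter_ad br1 al1 (p - 1) (S k x + y) x = (\<Sum>i = 1..p - 1. S (of_nat i * k ^ (i - 1)) (s i))"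
    "pm1 (x + y) = pm1 x + pm1 y + (\<Sum>i = 1..p - 1. s i)"
    using ps1 unfolding p_structure_def by blast
  obtain s' where s': "\<forall>k. iter_ad br2 al2 (p - 1) (T k (f x) + f y) (f x) = (\<Sum>i = 1..p - 1. T (of_nat i * k ^ (i - 1)) (s' i))"
    "pm2 (f x + f y) = pm2 (f x) + pm2 (f y) + (\<Sum>i = 1..p - 1. s' i)"
    using ps2 unfolding p_structure_def by blast
  have "(\<Sum>i = 1..p - 1. T (of_nat i * k ^ (i - 1)) (f (s i))) = (\<Sum>i = 1..p - 1. T (of_nat i * k ^ (i - 1)) (s' i))" for k
  proof -
    have "f (iter_ad br1 al1 (p - 1) (S k x + y) x) = iter_ad br2 al2 (p - 1) (f (S k x + y)) (f x)"
      by (intro iter_ad_hom f(2,3))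
    also have "f (S k x + y) = T k (f x) + f y" by (simp add: lin_add[OF f(1)] lin_scale[OF f(1)])
    finally show ?thesis
      using s(1) s'(1) by (simp add: lin_sum[OF f(1)] lin_scale[OF f(1)])
  qed
  then have "f (s i) = s' i" if "i \<in> {1..p - 1}" for i
    by (rule vector_space.weighted_poly_fun_eq_coeffs_eq[OF vs2 inf char _ that])
  then have "(\<Sum>i = 1..p - 1. f (s i)) = (\<Sum>i = 1..p - 1. s' i)"
    by (rule sum.cong[OF refl])
  then show ?thesis using s(2) s'(2) x y by (simp add: lin_add[OF f(1)] lin_sum[OF f(1)])
qed

lemma p_map_hom_scale:
  assumes "p_structure p S br1 al1 pm1" and "p_structure p T br2 al2 pm2"
    and f: "lin S T f" and x: "f (pm1 x) = pm2 (f x)"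
  shows "f (pm1 (S c x)) = pm2 (f (S c x))"
  using assms by (simp add: p_structure_scale lin_scale[OF f])

subsection \<open>Double extensions\<close>

lemma dsc_simp [simp]: "dsc sc c (a, u, b) = (c * a, sc c u, c * b)"
  by (simp add: dsc_def)

lemma dbr_simp [simp]:
  "dbr sc br B D (a, u, b) (a', v, b') = (0, br u v + sc a (D v) - sc a' (D u), B (D u) v)"
  by (simp add: dbr_def)

lemma dal_simp [simp]:
  "dal sc al B x0 lam0 (a, u, b) = (a, al u + sc a x0, B x0 u + a * lam0 + b)"
  by (simp add: dal_def)

lemma vector_space_dsc: "vector_space sc \<Longrightarrow> vector_space (dsc sc)"
  by (auto simp: vector_space_def dsc_def algebra_simps split: prod.splits)

lemma dal_add_e: "dal sc al B x0 lam0 (z + (0, 0, c)) = dal sc al B x0 lam0 z + (0, 0, c)"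
  by (cases z) (simp add: add.assoc)

lemma funpow_dal_add_e:
  "(dal sc al B x0 lam0 ^^ n) (z + (0, 0, c)) = (dal sc al B x0 lam0 ^^ n) z + (0, 0, c)"
  by (induction n) (simp_all add: dal_add_e)

lemma dbr_add_e: "dbr sc br B D (z + (0, 0, c)) y = dbr sc br B D z y"
  by (cases z; cases y) simp

lemma iter_ad_dext_add_e:
  "iter_ad (dbr sc br B D) (dal sc al B x0 lam0) n (z + (0, 0, c)) w
     = iter_ad (dbr sc br B D) (dal sc al B x0 lam0) n z w"
  by (induction n) (simp_all add: funpow_dal_add_e dbr_add_e)

lemma fst_iter_ad_dbr: "fst (iter_ad (dbr sc br B D) al (Suc n) z w) = 0"
  by (cases "(al ^^ n) z"; cases "iter_ad (dbr sc br B D) al n z w") simp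

lemma restricted_iff_on_generators:
  fixes f :: "'f::field \<times> 'v::ab_group_add \<times> 'f \<Rightarrow> 'f \<times> 'v \<times> 'f" and sc :: "'f \<Rightarrow> 'v \<Rightarrow> 'v"
  assumes vs: "vector_space sc" and inf: "infinite (UNIV :: 'f set)" and char: "CHAR('f) = p"
    and ps1: "p_structure p (dsc sc) br1 al1 pm1" and ps2: "p_structure p (dsc sc) br2 al2 pm2"
    and f: "lin (dsc sc) (dsc sc) f" "\<And>x y. f (br1 x y) = br2 (f x) (f y)" "\<And>x. f (al1 x) = al2 (f x)"
  shows "(\<forall>z. f (pm1 z) = pm2 (f z)) \<longleftrightarrow>
    f (pm1 (1, 0, 0)) = pm2 (f (1, 0, 0)) \<and> f (pm1 (0, 0, 1)) = pm2 (f (0, 0, 1))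
    \<and> (\<forall>u. f (pm1 (0, u, 0)) = pm2 (f (0, u, 0)))"
proof (intro iffI allI)
  fix z :: "'f \<times> 'v \<times> 'f"
  assume gen: "f (pm1 (1, 0, 0)) = pm2 (f (1, 0, 0)) \<and> f (pm1 (0, 0, 1)) = pm2 (f (0, 0, 1))
    \<and> (\<forall>u. f (pm1 (0, u, 0)) = pm2 (f (0, u, 0)))"
  obtain a u b where z: "z = dsc sc a (1, 0, 0) + (0, u, 0) + dsc sc b (0, 0, 1)"
  proof -
    interpret vector_space sc by (rule vs)
    show thesis using that by (cases z) simp
  qed
  note add = p_map_hom_add[OF ps1 ps2 vector_space_dsc[OF vs] inf char f]
  note scale = p_map_hom_scale[OF ps1 ps2 f(1)]
  show "f (pm1 z) = pm2 (f z)" unfolding z using gen by (intro add scale) auto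
qed simp

locale dext_p_structure =
  fixes p :: nat and sc :: "'f::field \<Rightarrow> 'v::ab_group_add \<Rightarrow> 'v"
    and br :: "'v \<Rightarrow> 'v \<Rightarrow> 'v" and al :: "'v \<Rightarrow> 'v" and B :: "'v \<Rightarrow> 'v \<Rightarrow> 'f"
    and pV :: "'v \<Rightarrow> 'v" and D :: "'v \<Rightarrow> 'v" and x0 :: 'v and lam0 :: 'f
    and pm :: "'f \<times> 'v \<times> 'f \<Rightarrow> 'f \<times> 'v \<times> 'f" and PP :: "'v \<Rightarrow> 'f"
    and xi :: 'f and a0 :: 'v and l :: 'f and u0 :: 'v and m :: 'f
  assumes infinite_field: "infinite (UNIV :: 'f set)" and char: "CHAR('f) = p" and p_gt_2: "p > 2"
    and hom_lie: "hom_lie sc br al" and quadratic: "quadratic_form sc br al B"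
    and pV: "p_structure p sc br al pV"
    and lin_D: "lin sc sc D" and invariant_D: "form_invariant B D"
    and pm: "p_structure p (dsc sc) (dbr sc br B D) (dal sc al B x0 lam0) pm"
    and pm_V: "\<And>u. pm (0, u, 0) = (0, pV u, PP u)"
    and pm_estar: "pm (1, 0, 0) = (xi, a0, l)"
    and pm_e: "pm (0, 0, 1) = (0, u0, m)"
    and PP_scale: "\<And>c u. PP (sc c u) = c ^ p * PP u"
begin

sublocale V: vector_space sc
  using hom_lie by (simp add: hom_lie_def)

sublocale L: vector_space "dsc sc"
  by (rule vector_space_dsc) unfold_locales

lemma two_neq_0: "(2 :: 'f) \<noteq> 0"
  using of_nat_neq_0_if_less_CHAR[of 2, where 'a='f] char p_gt_2 by simp

lemma odd_p: "odd p"
  using char p_gt_2 prime_CHAR_semidom[where 'a='f] prime_odd_nat by auto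

lemma p_minus_1: "p - 1 = Suc (p - 2)"
  using p_gt_2 by simp

lemma br_skew: "br x y = - br y x"
  and lin_br_right: "lin sc sc (br x)"
  and lin_br_left: "lin sc sc (\<lambda>x. br x y)"
  using hom_lie unfolding hom_lie_def by blast+

lemma B_sym: "B x y = B y x"
  and lin_B: "lin sc (*) (B x)"
  using quadratic unfolding quadratic_form_def by blast+

lemma br_self: "br v v = 0"
proof -
  have "br v v + br v v = 0" using br_skew by (simp only: eq_neg_iff_add_eq_0)
  then have "sc (1 + 1) (br v v) = 0" by (simp only: V.scale_left_distrib V.scale_one)
  then show ?thesis using two_neq_0 by simp
qed

lemma B_scale_left: "B (sc c x) y = c * B x y"
  using lin_scale[OF lin_B, of y c x] by (simp add: B_sym)

lemma B_D_self: "B (D v) v = 0"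
proof -
  have "B (D v) v + B (D v) v = 0"
    using invariant_D B_sym unfolding form_invariant_def by metis
  then show ?thesis using two_neq_0 by (simp add: mult_2[symmetric])
qed

lemma dbr_zero_right: "dbr sc br B D z 0 = 0"
  using lin_0[OF lin_br_right] lin_0[OF lin_B] lin_0[OF lin_D]
  by (cases z) (simp add: zero_prod_def)

lemma pV_uminus: "pV (- v) = - pV v"
  using p_structure_scale[OF pV, of "-1" v] odd_p by simp

lemma PP_uminus: "PP (- v) = - PP v"
  using PP_scale[of "-1" v] odd_p by simp

lemma pm_e_scale: "pm (0, 0, b) = (0, sc (b ^ p) u0, b ^ p * m)"
  using p_structure_scale[OF pm, of b "(0, 0, 1)"] pm_e by simp

text \<open>The p-map is additive on \<open>V \<oplus> F e\<close> because \<open>[v, v] = 0\<close> and \<open>B (D v) v = 0\<close>.\<close>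
lemma pm_V_e: "pm (0, v, b) = (0, pV v + sc (b ^ p) u0, PP v + b ^ p * m)"
proof -
  have "iter_ad (dbr sc br B D) (dal sc al B x0 lam0) (p - 1) (dsc sc k (0, v, 0) + (0, 0, b)) (0, v, 0) = 0"
    for k
  proof -
    have "br (sc k v) v = 0"
      using lin_scale[OF lin_br_left[of v], of k v] br_self by simp
    then have "dbr sc br B D (dsc sc k (0, v, 0) + (0, 0, b)) (0, v, 0) = 0"
      by (simp add: lin_scale[OF lin_D] B_scale_left B_D_self zero_prod_def)
    then show ?thesis unfolding p_minus_1 by (rule iter_ad_Suc_eq_0) (rule dbr_zero_right)
  qed
  from p_structure_add_if_iter_ad_eq_0[OF pm L.vector_space_axioms infinite_field char this]
  have "pm (0, v, b) = pm (0, v, 0) + pm (0, 0, b)" by simp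
  then show ?thesis by (simp add: pm_V pm_e_scale)
qed

lemma pm_estar_V_e:
  assumes \<Phi>: "\<And>k. iter_ad (dbr sc br B D) (dal sc al B x0 lam0) (p - 1) (k, v, 0) (1, 0, 0)
                = (\<Sum>i = 1..p - 1. dsc sc (k ^ (i - 1)) (\<Phi> i))"
  shows "pm (1, v, b) =
    (xi, a0 + pV v + sc (b ^ p) u0 + (\<Sum>i = 1..p - 1. sc (inverse (of_nat i)) (fst (snd (\<Phi> i)))),
     l + PP v + b ^ p * m + (\<Sum>i = 1..p - 1. inverse (of_nat i) * snd (snd (\<Phi> i))))"
proof -
  have fst_\<Phi>: "fst (\<Phi> i) = 0" if "i \<in> {1..p - 1}" for i
  proof -
    have "(\<Sum>j<p - 1. fst (\<Phi> (Suc j)) * k ^ j) = 0" for k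
    proof -
      have "fst (\<Sum>i = 1..p - 1. dsc sc (k ^ (i - 1)) (\<Phi> i)) = 0"
        using fst_iter_ad_dbr \<Phi> unfolding p_minus_1 by metis
      then show ?thesis
        by (simp add: fst_sum dsc_def case_prod_beta sum.atLeast1_atMost_eq mult.commute p_minus_1)
    qed
    from poly_fun_eq_0_coeff_eq_0[OF infinite_field this, of "i - 1"] that show ?thesis by auto
  qed
  have "pm ((1, 0, 0) + (0, v, b))
      = pm (1, 0, 0) + pm (0, v, b) + (\<Sum>i = 1..p - 1. dsc sc (inverse (of_nat i)) (\<Phi> i))"
  proof (rule p_structure_add[OF pm L.vector_space_axioms infinite_field char])
    fix k
    have "dsc sc k (1, 0, 0) + (0, v, b) = (k, v, 0) + (0, 0, b)" by simp
    then show "iter_ad (dbr sc br B D) (dal sc al B x0 lam0) (p - 1) (dsc sc k (1, 0, 0) + (0, v, b)) (1, 0, 0)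
      = (\<Sum>i = 1..p - 1. dsc sc (k ^ (i - 1)) (\<Phi> i))"
      by (simp only: iter_ad_dext_add_e \<Phi>)
  qed
  moreover have "(\<Sum>i = 1..p - 1. dsc sc (inverse (of_nat i)) (\<Phi> i))
      = (0, \<Sum>i = 1..p - 1. sc (inverse (of_nat i)) (fst (snd (\<Phi> i))),
            \<Sum>i = 1..p - 1. inverse (of_nat i) * snd (snd (\<Phi> i)))"
    using fst_\<Phi> by (simp add: prod_eq_iff fst_sum snd_sum dsc_def case_prod_beta)
  ultimately show ?thesis by (simp add: pm_estar pm_V_e add.assoc)
qed

end

subsection \<open>Adapted isomorphisms\<close>

locale dext_adapted_iso =
  L: dext_p_structure p sc br al B pV D x0 lam0 pL PP xi a0 l u0 m +
  T: dext_p_structure p sc br al B pV Dt x0t lam0t pLt PPt xit a0t lt u0t mt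
  for p :: nat and sc :: "'f::field \<Rightarrow> 'v::ab_group_add \<Rightarrow> 'v"
    and br al B pV D x0 lam0 pL PP xi a0 l u0 m Dt x0t lam0t pLt PPt xit a0t lt u0t mt +
  fixes \<pi> :: "'f \<times> 'v \<times> 'f \<Rightarrow> 'f \<times> 'v \<times> 'f" and \<pi>0 :: "'v \<Rightarrow> 'v" and \<gamma> :: 'f and t :: 'v
  assumes lin_\<pi>: "lin (dsc sc) (dsc sc) \<pi>"
    and \<pi>_V: "\<And>u. \<pi> (0, u, 0) = (0, \<pi>0 u, B t u)"
    and \<pi>_e: "\<pi> (0, 0, 1) = (0, 0, \<gamma>)"
    and \<pi>_estar: "\<pi> (1, 0, 0) = dsc sc (inverse \<gamma>) (1, - \<pi>0 t, - B t t / 2)"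
    and \<gamma>_neq_0: "\<gamma> \<noteq> 0"
begin

lemma \<pi>_triple:
  "\<pi> (a, u, b) = (a / \<gamma>, \<pi>0 u - sc (a / \<gamma>) (\<pi>0 t), B t u + b * \<gamma> - a / \<gamma> * B t t / 2)"
proof -
  have "(a, u, b) = dsc sc a (1, 0, 0) + (0, u, 0) + dsc sc b (0, 0, 1)" by simp
  then have "\<pi> (a, u, b) = dsc sc a (\<pi> (1, 0, 0)) + \<pi> (0, u, 0) + dsc sc b (\<pi> (0, 0, 1))"
    by (simp only: lin_add[OF lin_\<pi>] lin_scale[OF lin_\<pi>])
  then show ?thesis by (simp add: \<pi>_V \<pi>_e \<pi>_estar field_simps)
qed

lemma restricted_at_e_iff:
  "\<pi> (pL (0, 0, 1)) = pLt (\<pi> (0, 0, 1)) \<longleftrightarrow>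
     mt = inverse (\<gamma> ^ p) * (\<gamma> * m + B t u0) \<and> u0t = sc (inverse (\<gamma> ^ p)) (\<pi>0 u0)"
proof -
  have "\<pi> (pL (0, 0, 1)) = (0, \<pi>0 u0, B t u0 + m * \<gamma>)" by (simp add: L.pm_e \<pi>_triple)
  moreover have "pLt (\<pi> (0, 0, 1)) = (0, sc (\<gamma> ^ p) u0t, \<gamma> ^ p * mt)" by (simp add: \<pi>_e T.pm_e_scale)
  ultimately show ?thesis using \<gamma>_neq_0 by (auto simp: field_simps)
qed

lemma restricted_at_V_iff:
  "\<pi> (pL (0, u, 0)) = pLt (\<pi> (0, u, 0)) \<longleftrightarrow>
     \<pi>0 (pV u) = pV (\<pi>0 u) + sc ((B t u) ^ p) u0t
     \<and> PPt (\<pi>0 u) = \<gamma> * PP u + B t (pV u) - (B t u) ^ p * mt"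
proof -
  have "\<pi> (pL (0, u, 0)) = (0, \<pi>0 (pV u), B t (pV u) + PP u * \<gamma>)" by (simp add: L.pm_V \<pi>_triple)
  moreover have "pLt (\<pi> (0, u, 0)) = (0, pV (\<pi>0 u) + sc ((B t u) ^ p) u0t, PPt (\<pi>0 u) + (B t u) ^ p * mt)"
    by (simp add: \<pi>_V T.pm_V_e)
  moreover have "B t (pV u) + PP u * \<gamma> = PPt (\<pi>0 u) + (B t u) ^ p * mt
      \<longleftrightarrow> PPt (\<pi>0 u) = \<gamma> * PP u + B t (pV u) - (B t u) ^ p * mt"
    by (auto simp: algebra_simps)
  ultimately show ?thesis by auto
qed

lemma pLt_\<pi>_estar:
  assumes \<Phi>: "\<And>k. iter_ad (dbr sc br B Dt) (dal sc al B x0t lam0t) (p - 1) (k, - \<pi>0 t, 0) (1, 0, 0)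
                = (\<Sum>i = 1..p - 1. dsc sc (k ^ (i - 1)) (\<Phi> i))"
  shows "pLt (\<pi> (1, 0, 0)) = dsc sc (inverse (\<gamma> ^ p))
    (xit,
     a0t - pV (\<pi>0 t) + sc ((- B t t / 2) ^ p) u0t
       + (\<Sum>i = 1..p - 1. sc (inverse (of_nat i)) (fst (snd (\<Phi> i)))),
     lt - PPt (\<pi>0 t) + (- B t t / 2) ^ p * mt
       + (\<Sum>i = 1..p - 1. inverse (of_nat i) * snd (snd (\<Phi> i))))"
proof -
  have "pLt (\<pi> (1, 0, 0)) = dsc sc (inverse \<gamma> ^ p) (pLt (1, - \<pi>0 t, - B t t / 2))"
    unfolding \<pi>_estar by (rule p_structure_scale[OF T.pm])
  then show ?thesis
    by (simp add: T.pm_estar_V_e[OF \<Phi>] T.pV_uminus T.PP_uminus power_inverse)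
qed

lemma restricted_at_estar_iff:
  assumes \<Phi>: "\<And>k. iter_ad (dbr sc br B Dt) (dal sc al B x0t lam0t) (p - 1) (k, - \<pi>0 t, 0) (1, 0, 0)
                = (\<Sum>i = 1..p - 1. dsc sc (k ^ (i - 1)) (\<Phi> i))"
  shows "\<pi> (pL (1, 0, 0)) = pLt (\<pi> (1, 0, 0)) \<longleftrightarrow>
     xit = \<gamma> ^ (p - 1) * xi
   \<and> lt = \<gamma> ^ p * (B t a0 + \<gamma> * l - xi / (2 * \<gamma>) * B t t) + PPt (\<pi>0 t)
           + inverse (2 ^ p) * (B t t) ^ p * mt
           - (\<Sum>i = 1..p - 1. inverse (of_nat i) * snd (snd (\<Phi> i)))
   \<and> a0t = sc (\<gamma> ^ p) (\<pi>0 a0 - sc (inverse \<gamma> * xi) (\<pi>0 t)) + sc (inverse (2 ^ p) * (B t t) ^ p) u0t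
           + pV (\<pi>0 t) - (\<Sum>i = 1..p - 1. sc (inverse (of_nat i)) (fst (snd (\<Phi> i))))"
  (is "_ \<longleftrightarrow> ?xi \<and> ?l \<and> ?a0")
proof -
  define h where "h = - B t t / 2"
  define \<sigma>V where "\<sigma>V = (\<Sum>i = 1..p - 1. sc (inverse (of_nat i)) (fst (snd (\<Phi> i))))"
  define \<sigma>e where "\<sigma>e = (\<Sum>i = 1..p - 1. inverse (of_nat i) * snd (snd (\<Phi> i)))"
  have h_pow: "h ^ p = - (inverse (2 ^ p) * (B t t) ^ p)"
    using T.odd_p by (simp add: h_def power_divide field_simps)
  have "\<pi> (pL (1, 0, 0)) = (xi / \<gamma>, \<pi>0 a0 - sc (inverse \<gamma> * xi) (\<pi>0 t), B t a0 + l * \<gamma> + xi / \<gamma> * h)"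
    by (simp add: L.pm_estar \<pi>_triple h_def field_simps)
  moreover have "pLt (\<pi> (1, 0, 0)) = dsc sc (inverse (\<gamma> ^ p))
      (xit, a0t - pV (\<pi>0 t) + sc (h ^ p) u0t + \<sigma>V, lt - PPt (\<pi>0 t) + h ^ p * mt + \<sigma>e)"
    unfolding h_def \<sigma>V_def \<sigma>e_def by (rule pLt_\<pi>_estar[OF \<Phi>])
  moreover have "\<gamma> ^ p = \<gamma> * \<gamma> ^ (p - 1)"
    using T.p_gt_2 by (simp add: power_eq_if)
  then have "xi / \<gamma> = inverse (\<gamma> ^ p) * xit \<longleftrightarrow> ?xi"
    using \<gamma>_neq_0 by (auto simp: field_simps)
  moreover have "\<pi>0 a0 - sc (inverse \<gamma> * xi) (\<pi>0 t) = sc (inverse (\<gamma> ^ p)) (a0t - pV (\<pi>0 t) + sc (h ^ p) u0t + \<sigma>V)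
      \<longleftrightarrow> a0t - pV (\<pi>0 t) + sc (h ^ p) u0t + \<sigma>V = sc (\<gamma> ^ p) (\<pi>0 a0 - sc (inverse \<gamma> * xi) (\<pi>0 t))"
    using \<gamma>_neq_0 by auto
  moreover have "\<dots> \<longleftrightarrow> ?a0"
    by (auto simp: h_pow \<sigma>V_def algebra_simps)
  moreover have "B t a0 + l * \<gamma> + xi / \<gamma> * h = inverse (\<gamma> ^ p) * (lt - PPt (\<pi>0 t) + h ^ p * mt + \<sigma>e)
      \<longleftrightarrow> lt = \<gamma> ^ p * (B t a0 + l * \<gamma> + xi / \<gamma> * h) + PPt (\<pi>0 t) - h ^ p * mt - \<sigma>e"
    using \<gamma>_neq_0 by (auto simp: field_simps)
  moreover have "xi / \<gamma> * h = - (xi / (2 * \<gamma>) * B t t)"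
    by (simp add: h_def)
  then have "\<gamma> ^ p * (B t a0 + l * \<gamma> + xi / \<gamma> * h) + PPt (\<pi>0 t) - h ^ p * mt - \<sigma>e
      = \<gamma> ^ p * (B t a0 + \<gamma> * l - xi / (2 * \<gamma>) * B t t) + PPt (\<pi>0 t)
        + inverse (2 ^ p) * (B t t) ^ p * mt - \<sigma>e"
    by (simp add: h_pow algebra_simps)
  ultimately show ?thesis unfolding \<sigma>e_def by auto
qed

end

theorem theorem4p13:
  fixes p :: nat
    and sc :: "'f::alg_closed_field \<Rightarrow> 'v::ab_group_add \<Rightarrow> 'v"
    and br :: "'v \<Rightarrow> 'v \<Rightarrow> 'v" and al :: "'v \<Rightarrow> 'v" and B :: "'v \<Rightarrow> 'v \<Rightarrow> 'f" and pV :: "'v \<Rightarrow> 'v"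
    and D Dt :: "'v \<Rightarrow> 'v" and xi xit :: 'f and a0 a0t :: 'v
    and x0 x0t :: 'v and lam0 lam0t :: 'f
    and pL pLt :: "'f \<times> 'v \<times> 'f \<Rightarrow> 'f \<times> 'v \<times> 'f"
    and l m lt mt :: 'f and u0 u0t :: 'v
    and PP PPt :: "'v \<Rightarrow> 'f" and eta etat :: "nat \<Rightarrow> 'v \<Rightarrow> 'v \<Rightarrow> 'f"
    and \<pi> :: "'f \<times> 'v \<times> 'f \<Rightarrow> 'f \<times> 'v \<times> 'f" and \<pi>0 :: "'v \<Rightarrow> 'v"
    and \<gamma> :: 'f and t :: 'v
    and \<Phi> :: "nat \<Rightarrow> 'f \<times> 'v \<times> 'f"
  assumes char: "CHAR('f) = p" and p2: "p > 2"
    and V: "restricted_inv_quad_hom_lie p sc br al B pV"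
    and D: "hom_der sc br al D" "restricted_der p br al pV D" "p_property p sc br al D xi a0"
    and Dt: "hom_der sc br al Dt" "restricted_der p br al pV Dt" "p_property p sc br al Dt xit a0t"
    and invD: "form_invariant B D" and invDt: "form_invariant B Dt"
    and x0: "dext_data br al D x0" and x0t: "dext_data br al Dt x0t"
    and eta: "\<forall>u v k. B (D ((al ^^ (p - 2)) (sc k u + v))) (iter_ad br al (p - 2) (sc k u + v) u)
                = (\<Sum>i = 1..p - 1. of_nat i * eta i u v * k ^ (i - 1))"
    and etat: "\<forall>u v k. B (Dt ((al ^^ (p - 2)) (sc k u + v))) (iter_ad br al (p - 2) (sc k u + v) u)
                = (\<Sum>i = 1..p - 1. of_nat i * etat i u v * k ^ (i - 1))"
    and PP: "\<forall>c u. PP (sc c u) = c ^ p * PP u"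
            "\<forall>u v. PP (u + v) = PP u + PP v + (\<Sum>i = 1..p - 1. eta i u v)"
    and PPt: "\<forall>c u. PPt (sc c u) = c ^ p * PPt u"
            "\<forall>u v. PPt (u + v) = PPt u + PPt v + (\<Sum>i = 1..p - 1. etat i u v)"
    and u0: "\<forall>v. br u0 v = 0" "D u0 = 0"
    and u0t: "\<forall>v. br u0t v = 0" "Dt u0t = 0"
    and pL: "p_structure p (dsc sc) (dbr sc br B D) (dal sc al B x0 lam0) pL"
            "\<forall>u. pL (0, u, 0) = (0, pV u, PP u)"
            "pL (1, 0, 0) = (xi, a0, l)"
            "pL (0, 0, 1) = (0, u0, m)"
    and pLt: "p_structure p (dsc sc) (dbr sc br B Dt) (dal sc al B x0t lam0t) pLt"
            "\<forall>u. pLt (0, u, 0) = (0, pV u, PPt u)"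
            "pLt (1, 0, 0) = (xit, a0t, lt)"
            "pLt (0, 0, 1) = (0, u0t, mt)"
    and \<pi>0: "V_automorphism sc br al B \<pi>0"
    and \<gamma>: "\<gamma> \<noteq> 0"
    and \<pi>: "adapted_iso sc (dbr sc br B D) (dal sc al B x0 lam0) (dB B)
                          (dbr sc br B Dt) (dal sc al B x0t lam0t) (dB B) \<pi>"
    and \<pi>_V: "\<forall>u. \<pi> (0, u, 0) = (0, \<pi>0 u, B t u)"
    and \<pi>_e: "\<pi> (0, 0, 1) = (0, 0, \<gamma>)"
    and \<pi>_estar: "\<pi> (1, 0, 0) = dsc sc (inverse \<gamma>) (1, - \<pi>0 t, - B t t / 2)"
    and \<Phi>: "\<forall>k. iter_ad (dbr sc br B Dt) (dal sc al B x0t lam0t) (p - 1) (k, - \<pi>0 t, 0) (1, 0, 0)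
                = (\<Sum>i = 1..p - 1. dsc sc (k ^ (i - 1)) (\<Phi> i))"
  shows "(\<forall>f. \<pi> (pL f) = pLt (\<pi> f)) \<longleftrightarrow>
     ((\<forall>u. \<pi>0 (pV u) = pV (\<pi>0 u) + sc ((B t u) ^ p) u0t)
    \<and> (\<forall>u. PPt (\<pi>0 u) = \<gamma> * PP u + B t (pV u) - (B t u) ^ p * mt)
    \<and> xit = \<gamma> ^ (p - 1) * xi
    \<and> lt = \<gamma> ^ p * (B t a0 + \<gamma> * l - xi / (2 * \<gamma>) * B t t) + PPt (\<pi>0 t)
           + inverse (2 ^ p) * (B t t) ^ p * mt
           - (\<Sum>i = 1..p - 1. inverse (of_nat i) * snd (snd (\<Phi> i)))
    \<and> a0t = sc (\<gamma> ^ p) (\<pi>0 a0 - sc (inverse \<gamma> * xi) (\<pi>0 t)) + sc (inverse (2 ^ p) * (B t t) ^ p) u0t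
           + pV (\<pi>0 t) - (\<Sum>i = 1..p - 1. sc (inverse (of_nat i)) (fst (snd (\<Phi> i))))
    \<and> mt = inverse (\<gamma> ^ p) * (\<gamma> * m + B t u0)
    \<and> u0t = sc (inverse (\<gamma> ^ p)) (\<pi>0 u0))"
proof -
  have infinite: "infinite (UNIV :: 'f set)" by (rule infinite_UNIV_alg_closed_field)
  have V_parts: "hom_lie sc br al" "quadratic_form sc br al B" "p_structure p sc br al pV"
    using V unfolding restricted_inv_quad_hom_lie_def by auto
  have \<pi>_hom: "lin (dsc sc) (dsc sc) \<pi>"
      "\<And>x y. \<pi> (dbr sc br B D x y) = dbr sc br B Dt (\<pi> x) (\<pi> y)"
      "\<And>x. \<pi> (dal sc al B x0 lam0 x) = dal sc al B x0t lam0t (\<pi> x)"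
    using \<pi> unfolding adapted_iso_def by auto
  interpret dext_adapted_iso p sc br al B pV D x0 lam0 pL PP xi a0 l u0 m
      Dt x0t lam0t pLt PPt xit a0t lt u0t mt \<pi> \<pi>0 \<gamma> t
    using infinite char p2 V_parts D(1) Dt(1) invD invDt pL pLt PP(1) PPt(1)
      \<pi>_hom(1) \<pi>_V \<pi>_e \<pi>_estar \<gamma>
    by unfold_locales (auto simp: hom_der_def)
  have "(\<forall>f. \<pi> (pL f) = pLt (\<pi> f)) \<longleftrightarrow>
      \<pi> (pL (1, 0, 0)) = pLt (\<pi> (1, 0, 0)) \<and> \<pi> (pL (0, 0, 1)) = pLt (\<pi> (0, 0, 1))
      \<and> (\<forall>u. \<pi> (pL (0, u, 0)) = pLt (\<pi> (0, u, 0)))"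
    by (rule restricted_iff_on_generators[OF L.V.vector_space_axioms infinite char pL(1) pLt(1) \<pi>_hom])
  then show ?thesis
    unfolding restricted_at_estar_iff[OF \<Phi>[rule_format]] restricted_at_e_iff restricted_at_V_iff
    by blast
qed

end
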